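(* Let $n\ge2$, $\mathbf b\in\mathbb R^{n-1}$ with $\mathbf b\notin\mathcal W^+_n(1,n-1)$, and $v>n$. For $Q>0$ let $\mathcal A(\mathbf b,v,Q)$ be the set of $x\in[0,1)$ for which $|p+(\tilde{\mathbf b}\mathbf q)x|<Q^{-v}$ for some $p\in\mathbb Z$ and $\mathbf q=(q_0,\dots,q_{n-1})^T\in\mathbb Z^n$ with $Q\le\|\mathbf q\|<2Q$, where $\tilde{\mathbf b}=(1,b_1,\dots,b_{n-1})$. Then there exists $C=C(\mathbf b,v)>0$ such that $|\mathcal A(\mathbf b,v,Q)|<CQ^{\frac{n-v}2}$ for all $Q>1$.
   Context: Sup-norms; $|\cdot|$ is Lebesgue measure. $\mathbf b\in\mathcal W_u(1,n-1)$ means there are infinitely many $\mathbf q\in\mathbb Z^{n-1}$ with $|\mathbf b\mathbf q+p|\le\|\mathbf q\|^{-u}$ for some $p\in\mathbb Z$; $\mathcal W^+_n(1,n-1)=\bigcup_{u>n}\mathcal W_u(1,n-1)$. *)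

theory Defs
  imports "HOL-Analysis.Analysis"
begin

(* Vectors of varying dimension are represented as functions on nat with an
   explicit index set. Sup-norm of an integer vector over index set I. *)
definition supnorm :: "nat set \<Rightarrow> (nat \<Rightarrow> int) \<Rightarrow> real" where
  "supnorm I q = real_of_int (Max ((\<lambda>i. \<bar>q i\<bar>) ` I))"

definition W_u :: "nat \<Rightarrow> real \<Rightarrow> (nat \<Rightarrow> real) \<Rightarrow> bool" where
  "W_u n u b \<longleftrightarrow>
     infinite {q :: nat \<Rightarrow> int. (\<forall>i. i \<notin> {1..n-1} \<longrightarrow> q i = 0) \<and>
       (\<exists>p::int. \<bar>(\<Sum>i\<in>{1..n-1}. b i * of_int (q i)) + of_int p\<bar>
                   \<le> supnorm {1..n-1} q powr (- u))}"

definition W_plus :: "nat \<Rightarrow> (nat \<Rightarrow> real) \<Rightarrow> bool" where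
  "W_plus n b \<longleftrightarrow> (\<exists>u > real n. W_u n u b)"

definition A_set :: "nat \<Rightarrow> (nat \<Rightarrow> real) \<Rightarrow> real \<Rightarrow> real \<Rightarrow> real set" where
  "A_set n b v Q = {x \<in> {0..<1}. \<exists>p::int. \<exists>q :: nat \<Rightarrow> int.
      (\<forall>i. i \<ge> n \<longrightarrow> q i = 0) \<and>
      Q \<le> supnorm {0..<n} q \<and> supnorm {0..<n} q < 2 * Q \<and>
      \<bar>of_int p + (of_int (q 0) + (\<Sum>i\<in>{1..n-1}. b i * of_int (q i))) * x\<bar> < Q powr (- v)}"

end

theory Submission
  imports Defs
begin

(*
  Write L(q) = q_0 + b_1 q_1 + ... + b_(n-1) q_(n-1) and fix n < u < v. Since b is not in
  W_u(1,n-1), |L(q)| >= c R^(-u) for all nonzero integer vectors q of sup-norm at most R: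
  the finitely many exceptional vectors are handled by their positive distance from the
  integers, and an exact relation L(q) = 0 would make all multiples of q exceptional.

  A(b,v,Q) is covered by the sets {x in [0,1). dist(L(q) x, Z) < Q^(-v)} over the nonzero q
  with |q| <= 2Q, each a union of intervals of total length at most 4 Q^(-v) + 6 Q^(-v) / |L(q)|.
  There are at most (5Q)^n such q, and their values L(q) are delta-separated with
  delta = c (4Q)^(-u) and of size O(Q), so each shell [j delta, (j+1) delta) contains at most
  two of them and the sum of the 1/|L(q)| is O(Q^u log Q). The total, O(Q^(n-v) + Q^(u-v) log Q),
  is O(Q^((n-v)/2)) for u = (3n+v)/4.
*)

section \<open>Measure of near-integer multiples\<close>

definition near_int_set :: "real \<Rightarrow> real \<Rightarrow> real set" where
  "near_int_set L \<epsilon> = {x \<in> {0..<1}. \<exists>p::int. \<bar>of_int p + L * x\<bar> < \<epsilon>}"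

lemma measure_le_fmeasurable_superset:
  assumes "A \<subseteq> B" "B \<in> fmeasurable M"
  shows "measure M A \<le> measure M B"
proof (cases "A \<in> sets M")
  case True
  then show ?thesis using assms by (intro measure_mono_fmeasurable)
next
  case False
  then show ?thesis by (simp add: measure_notin_sets)
qed

lemma near_int_set_lmeasurable: "near_int_set L \<epsilon> \<in> lmeasurable"
  unfolding near_int_set_def
  by (rule bounded_set_imp_lmeasurable) (auto intro: bounded_subset[of "{0..1}"])

lemma measure_near_int_set_le:
  fixes L \<epsilon> :: real
  assumes L: "L \<noteq> 0" and \<epsilon>: "0 < \<epsilon>" "\<epsilon> \<le> 1"
  shows "measure lebesgue (near_int_set L \<epsilon>) \<le> 4 * \<epsilon> + 6 * \<epsilon> / \<bar>L\<bar>"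
proof -
  define K where "K = \<lfloor>\<bar>L\<bar>\<rfloor> + 1"
  define I where "I = (\<lambda>p::int. {- of_int p / L - \<epsilon> / \<bar>L\<bar> .. - of_int p / L + \<epsilon> / \<bar>L\<bar>})"
  have cover: "near_int_set L \<epsilon> \<subseteq> (\<Union>p\<in>{-K..K}. I p)"
  proof
    fix x assume "x \<in> near_int_set L \<epsilon>"
    then obtain p :: int where x: "x \<in> {0..<1}" and p: "\<bar>of_int p + L * x\<bar> < \<epsilon>"
      unfolding near_int_set_def by blast
    have "\<bar>L * x\<bar> \<le> \<bar>L\<bar>" using x by (auto simp: abs_mult mult_left_le)
    then have "of_int \<bar>p\<bar> < \<bar>L\<bar> + 1" using p \<epsilon> by linarith
    then have "\<bar>p\<bar> \<le> K" unfolding K_def by linarith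
    then have "p \<in> {-K..K}" by auto
    moreover have "\<bar>L\<bar> * \<bar>x + of_int p / L\<bar> < \<epsilon>"
      using p L by (simp add: abs_mult[symmetric] algebra_simps)
    then have "\<bar>x + of_int p / L\<bar> < \<epsilon> / \<bar>L\<bar>"
      using L by (simp add: pos_less_divide_eq mult.commute)
    then have "x \<in> I p" by (simp add: I_def abs_less_iff)
    ultimately show "x \<in> (\<Union>p\<in>{-K..K}. I p)" by blast
  qed
  have "measure lebesgue (near_int_set L \<epsilon>) \<le> measure lebesgue (\<Union>p\<in>{-K..K}. I p)"
    by (rule measure_le_fmeasurable_superset[OF cover]) (auto simp: I_def)
  also have "\<dots> \<le> (\<Sum>p\<in>{-K..K}. measure lebesgue (I p))"
    by (rule measure_UNION_le) (auto simp: I_def)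
  also have "\<dots> = (2 * of_int K + 1) * (2 * \<epsilon> / \<bar>L\<bar>)"
    using \<epsilon> unfolding K_def by (simp add: I_def)
  also have "\<dots> \<le> (2 * \<bar>L\<bar> + 3) * (2 * \<epsilon> / \<bar>L\<bar>)"
    using \<epsilon> of_int_floor_le[of "\<bar>L\<bar>"] unfolding K_def by (intro mult_right_mono) auto
  also have "\<dots> = 4 * \<epsilon> + 6 * \<epsilon> / \<bar>L\<bar>"
    using L by (simp add: field_simps)
  finally show ?thesis .
qed

section \<open>Diophantine lower bound for the linear form\<close>

definition dist_int :: "real \<Rightarrow> real" where
  "dist_int y = min (frac y) (1 - frac y)"

lemma dist_int_le: "dist_int y \<le> \<bar>y + of_int p\<bar>"
proof -
  have "y + of_int p = frac y + of_int (\<lfloor>y\<rfloor> + p)" by (simp add: frac_def)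
  moreover have "dist_int y \<le> \<bar>frac y + of_int m\<bar>" for m :: int
    using frac_ge_0[of y] frac_lt_1[of y] unfolding dist_int_def
    by (cases "0 \<le> m") auto
  ultimately show ?thesis by presburger
qed

lemma dist_int_pos:
  assumes "\<And>p::int. y + of_int p \<noteq> 0"
  shows "0 < dist_int y"
proof -
  have "frac y \<noteq> 0" using assms[of "- \<lfloor>y\<rfloor>"] by (auto simp: frac_def)
  then show ?thesis using frac_ge_0[of y] frac_lt_1[of y] by (simp add: dist_int_def)
qed

lemma abs_le_supnorm:
  assumes "finite I" "i \<in> I"
  shows "real_of_int \<bar>q i\<bar> \<le> supnorm I q"
  unfolding supnorm_def of_int_le_iff of_int_abs[symmetric] using assms by (intro Max_ge) auto

lemma supnorm_le:
  assumes "finite I" "I \<noteq> {}" "\<And>i. i \<in> I \<Longrightarrow> real_of_int \<bar>q i\<bar> \<le> R"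
  shows "supnorm I q \<le> R"
proof -
  obtain i where "i \<in> I" "Max ((\<lambda>i. \<bar>q i\<bar>) ` I) = \<bar>q i\<bar>"
    using Max_in[of "(\<lambda>i. \<bar>q i\<bar>) ` I"] assms(1,2) by fastforce
  then show ?thesis using assms(3) by (simp add: supnorm_def)
qed

definition lin_form :: "nat \<Rightarrow> (nat \<Rightarrow> real) \<Rightarrow> (nat \<Rightarrow> int) \<Rightarrow> real" where
  "lin_form n b q = of_int (q 0) + (\<Sum>i\<in>{1..n-1}. b i * of_int (q i))"

definition int_box :: "nat \<Rightarrow> real \<Rightarrow> (nat \<Rightarrow> int) set" where
  "int_box n R = {q. (\<forall>i. n \<le> i \<longrightarrow> q i = 0) \<and> (\<forall>i<n. real_of_int \<bar>q i\<bar> \<le> R)}"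

lemma not_W_u_imp_no_integer_relation:
  assumes nW: "\<not> W_u n u b" and supp: "\<forall>i. i \<notin> {1..n-1} \<longrightarrow> e i = 0" and e: "e \<noteq> (\<lambda>_. 0)"
  shows "(\<Sum>i\<in>{1..n-1}. b i * of_int (e i)) + of_int p \<noteq> 0"
proof
  assume rel: "(\<Sum>i\<in>{1..n-1}. b i * of_int (e i)) + of_int p = 0"
  define f where "f = (\<lambda>k::nat. \<lambda>i. int (Suc k) * e i)"
  have "f k \<in> {q. (\<forall>i. i \<notin> {1..n-1} \<longrightarrow> q i = 0) \<and>
       (\<exists>p::int. \<bar>(\<Sum>i\<in>{1..n-1}. b i * of_int (q i)) + of_int p\<bar> \<le> supnorm {1..n-1} q powr (- u))}"
    for k
  proof -
    have "(\<Sum>i\<in>{1..n-1}. b i * of_int (f k i)) + of_int (int (Suc k) * p)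
        = real (Suc k) * ((\<Sum>i\<in>{1..n-1}. b i * of_int (e i)) + of_int p)"
      unfolding f_def by (simp add: sum_distrib_left algebra_simps)
    then have "\<bar>(\<Sum>i\<in>{1..n-1}. b i * of_int (f k i)) + of_int (int (Suc k) * p)\<bar>
        \<le> supnorm {1..n-1} (f k) powr (- u)"
      using rel by simp
    moreover have "\<forall>i. i \<notin> {1..n-1} \<longrightarrow> f k i = 0" using supp by (simp add: f_def)
    ultimately show ?thesis by blast
  qed
  moreover have "inj f"
  proof
    fix k l assume "f k = f l"
    obtain i where "e i \<noteq> 0" using e by auto
    with \<open>f k = f l\<close> show "k = l" unfolding f_def by (metis mult_cancel_right of_nat_eq_iff nat.inject)
  qed
  ultimately show False
    using nW unfolding W_u_def by (meson finite_subset image_subsetI range_inj_infinite)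
qed

lemma not_W_u_imp_bounded_below:
  assumes nW: "\<not> W_u n u b" and u: "0 \<le> u"
  obtains c where "0 < c" "c \<le> 1"
    "\<And>e p. \<forall>i. i \<notin> {1..n-1} \<longrightarrow> e i = 0 \<Longrightarrow> e \<noteq> (\<lambda>_. 0) \<Longrightarrow>
       c * supnorm {1..n-1} e powr (- u) \<le> \<bar>(\<Sum>i\<in>{1..n-1}. b i * of_int (e i)) + of_int p\<bar>"
proof -
  define E where "E = {q. (\<forall>i. i \<notin> {1..n-1} \<longrightarrow> q i = 0) \<and>
       (\<exists>p::int. \<bar>(\<Sum>i\<in>{1..n-1}. b i * of_int (q i)) + of_int p\<bar> \<le> supnorm {1..n-1} q powr (- u))}"
  define y where "y = (\<lambda>e. \<Sum>i\<in>{1..n-1}. b i * of_int (e i))"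
  define c where "c = Min (insert 1 ((\<lambda>e. dist_int (y e)) ` (E - {\<lambda>_. 0})))"
  have fin: "finite (insert 1 ((\<lambda>e. dist_int (y e)) ` (E - {\<lambda>_. 0})))"
    using nW unfolding W_u_def E_def by simp
  have "0 < dist_int (y e)" if "e \<in> E - {\<lambda>_. 0}" for e
  proof -
    from that have "\<forall>i. i \<notin> {1..n-1} \<longrightarrow> e i = 0" "e \<noteq> (\<lambda>_. 0)" unfolding E_def by blast+
    then show ?thesis unfolding y_def by (intro dist_int_pos not_W_u_imp_no_integer_relation[OF nW])
  qed
  then have "0 < c" unfolding c_def using fin by (subst Min_gr_iff) auto
  moreover have "c \<le> 1" unfolding c_def using fin by simp
  moreover have "c * supnorm {1..n-1} e powr (- u) \<le> \<bar>y e + of_int p\<bar>"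
    if supp: "\<forall>i. i \<notin> {1..n-1} \<longrightarrow> e i = 0" and e: "e \<noteq> (\<lambda>_. 0)" for e p
  proof -
    obtain i where "e i \<noteq> 0" using e by auto
    with supp have "i \<in> {1..n-1}" by auto
    then have "real_of_int \<bar>e i\<bar> \<le> supnorm {1..n-1} e" by (intro abs_le_supnorm) auto
    with \<open>e i \<noteq> 0\<close> have S: "1 \<le> supnorm {1..n-1} e" by linarith
    then have S_le: "supnorm {1..n-1} e powr (- u) \<le> 1"
      using u by (simp add: powr_minus divide_simps ge_one_powr_ge_zero)
    show ?thesis
    proof (cases "e \<in> E")
      case True
      have "c * supnorm {1..n-1} e powr (- u) \<le> c"
        using S_le \<open>0 < c\<close> by (simp add: mult_left_le)
      also have "\<dots> \<le> dist_int (y e)" unfolding c_def using fin True e by (intro Min_le) auto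
      also have "\<dots> \<le> \<bar>y e + of_int p\<bar>" by (rule dist_int_le)
      finally show ?thesis .
    next
      case False
      then have "supnorm {1..n-1} e powr (- u) < \<bar>y e + of_int p\<bar>"
        using supp unfolding E_def y_def by (simp add: not_le)
      moreover have "c * supnorm {1..n-1} e powr (- u) \<le> supnorm {1..n-1} e powr (- u)"
        using \<open>c \<le> 1\<close> \<open>0 < c\<close> by (intro mult_left_le_one_le) auto
      ultimately show ?thesis by linarith
    qed
  qed
  ultimately show ?thesis using that unfolding y_def by blast
qed

lemma not_W_u_imp_lin_form_bounded_below:
  assumes nW: "\<not> W_u n u b" and u: "0 \<le> u"
  obtains c where "0 < c"
    "\<And>R d. 1 \<le> R \<Longrightarrow> d \<in> int_box n R - {\<lambda>_. 0} \<Longrightarrow> c * R powr (- u) \<le> \<bar>lin_form n b d\<bar>"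
proof -
  obtain c where c: "0 < c" "c \<le> 1" and hom:
    "\<And>e p. \<forall>i. i \<notin> {1..n-1} \<longrightarrow> e i = 0 \<Longrightarrow> e \<noteq> (\<lambda>_. 0) \<Longrightarrow>
       c * supnorm {1..n-1} e powr (- u) \<le> \<bar>(\<Sum>i\<in>{1..n-1}. b i * of_int (e i)) + of_int p\<bar>"
    using not_W_u_imp_bounded_below[OF nW u] by blast
  have "c * R powr (- u) \<le> \<bar>lin_form n b d\<bar>" if R: "1 \<le> R" and d: "d \<in> int_box n R - {\<lambda>_. 0}" for R d
  proof -
    define e where "e = (\<lambda>i. if i \<in> {1..n-1} then d i else 0)"
    have L: "lin_form n b d = (\<Sum>i\<in>{1..n-1}. b i * of_int (e i)) + of_int (d 0)"
      unfolding lin_form_def e_def by simp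
    show ?thesis
    proof (cases "e = (\<lambda>_. 0)")
      case True
      have "d i = 0" if "i \<noteq> 0" for i
        using d fun_cong[OF True, of i] that unfolding int_box_def e_def
        by (cases "i \<in> {1..n-1}") auto
      with d have "d 0 \<noteq> 0" by (metis DiffD2 ext singletonI)
      then have "1 \<le> \<bar>lin_form n b d\<bar>" unfolding L True by simp
      moreover have "c * R powr (- u) \<le> 1"
        using c R u by (intro mult_le_one) (auto simp: powr_minus divide_simps ge_one_powr_ge_zero)
      ultimately show ?thesis by linarith
    next
      case False
      have "{1..n-1} \<noteq> {}" using False unfolding e_def by auto
      then have S: "supnorm {1..n-1} e \<le> R"
        using d R unfolding int_box_def e_def by (intro supnorm_le) auto
      obtain i where "e i \<noteq> 0" using False by auto
      then have "i \<in> {1..n-1}" by (auto simp: e_def split: if_splits)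
      then have "real_of_int \<bar>e i\<bar> \<le> supnorm {1..n-1} e" by (intro abs_le_supnorm) auto
      with \<open>e i \<noteq> 0\<close> have "1 \<le> supnorm {1..n-1} e" by linarith
      with S u have "R powr (- u) \<le> supnorm {1..n-1} e powr (- u)" by (intro powr_mono2') auto
      then have "c * R powr (- u) \<le> c * supnorm {1..n-1} e powr (- u)" using c by simp
      also have "\<dots> \<le> \<bar>lin_form n b d\<bar>" unfolding L by (rule hom[OF _ False]) (simp add: e_def)
      finally show ?thesis .
    qed
  qed
  with c show ?thesis using that by blast
qed

section \<open>Reciprocal sums of separated reals\<close>

lemma inj_on_sgn_shell:
  fixes S :: "real set"
  assumes \<delta>: "0 < \<delta>" and sep: "\<And>s t. s \<in> S \<Longrightarrow> t \<in> S \<Longrightarrow> s \<noteq> t \<Longrightarrow> \<delta> \<le> \<bar>s - t\<bar>"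
  shows "inj_on (\<lambda>s. (sgn s, nat \<lfloor>\<bar>s\<bar> / \<delta>\<rfloor>)) S"
proof (rule inj_onI, rule ccontr)
  fix s t assume st: "s \<in> S" "t \<in> S" "(sgn s, nat \<lfloor>\<bar>s\<bar> / \<delta>\<rfloor>) = (sgn t, nat \<lfloor>\<bar>t\<bar> / \<delta>\<rfloor>)" "s \<noteq> t"
  define j where "j = \<lfloor>\<bar>s\<bar> / \<delta>\<rfloor>"
  have shell: "of_int \<lfloor>\<bar>x\<bar> / \<delta>\<rfloor> * \<delta> \<le> \<bar>x\<bar>" "\<bar>x\<bar> < of_int \<lfloor>\<bar>x\<bar> / \<delta>\<rfloor> * \<delta> + \<delta>" for x
    using floor_divide_lower[OF \<delta>, of "\<bar>x\<bar>"] floor_divide_upper[OF \<delta>, of "\<bar>x\<bar>"]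
    by (simp_all add: algebra_simps)
  have "\<lfloor>\<bar>t\<bar> / \<delta>\<rfloor> = j" using st(3) \<delta> unfolding j_def by (simp add: eq_nat_nat_iff)
  then have "of_int j * \<delta> \<le> \<bar>t\<bar>" "\<bar>t\<bar> < of_int j * \<delta> + \<delta>" using shell[of t] by simp_all
  moreover have "of_int j * \<delta> \<le> \<bar>s\<bar>" "\<bar>s\<bar> < of_int j * \<delta> + \<delta>"
    using shell[of s] unfolding j_def by simp_all
  ultimately have "\<bar>\<bar>s\<bar> - \<bar>t\<bar>\<bar> < \<delta>" unfolding abs_less_iff by linarith
  moreover from st(3) have "\<bar>s - t\<bar> = \<bar>\<bar>s\<bar> - \<bar>t\<bar>\<bar>" by (auto simp: sgn_if split: if_splits)
  ultimately show False using sep[OF st(1,2,4)] by simp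
qed

lemma sum_inverse_separated_le_harm:
  fixes S :: "real set"
  assumes \<delta>: "0 < \<delta>"
    and bounds: "\<And>s. s \<in> S \<Longrightarrow> \<delta> \<le> \<bar>s\<bar> \<and> \<bar>s\<bar> \<le> T"
    and sep: "\<And>s t. s \<in> S \<Longrightarrow> t \<in> S \<Longrightarrow> s \<noteq> t \<Longrightarrow> \<delta> \<le> \<bar>s - t\<bar>"
  shows "(\<Sum>s\<in>S. 1 / \<bar>s\<bar>) \<le> 2 / \<delta> * harm (nat \<lfloor>T / \<delta>\<rfloor>)"
proof -
  define M where "M = nat \<lfloor>T / \<delta>\<rfloor>"
  define k where "k = (\<lambda>s. nat \<lfloor>\<bar>s\<bar> / \<delta>\<rfloor>)"
  define h where "h = (\<lambda>(\<sigma>::real, j::nat). 1 / (\<delta> * real j))"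
  have k_range: "k s \<in> {1..M}" if "s \<in> S" for s
  proof -
    have "1 \<le> \<bar>s\<bar> / \<delta>" "\<bar>s\<bar> / \<delta> \<le> T / \<delta>" using bounds[OF that] \<delta> by (auto simp: divide_right_mono)
    then have "1 \<le> k s" "k s \<le> M" unfolding k_def M_def by (linarith, intro nat_mono floor_mono)
    then show ?thesis by simp
  qed
  have "(\<Sum>s\<in>S. 1 / \<bar>s\<bar>) \<le> (\<Sum>s\<in>S. h (sgn s, k s))"
  proof (rule sum_mono)
    fix s assume "s \<in> S"
    then have "0 < \<delta> * real (k s)" using k_range \<delta> by force
    moreover have "\<delta> * real (k s) \<le> \<bar>s\<bar>"
      using \<delta> floor_divide_lower[of \<delta> "\<bar>s\<bar>"] unfolding k_def by (auto simp: mult.commute)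
    ultimately show "1 / \<bar>s\<bar> \<le> h (sgn s, k s)" by (simp add: h_def frac_le)
  qed
  also have "\<dots> = (\<Sum>z\<in>(\<lambda>s. (sgn s, k s)) ` S. h z)"
    using inj_on_sgn_shell[OF \<delta> sep] unfolding k_def by (simp add: sum.reindex)
  also have "\<dots> \<le> (\<Sum>z\<in>{-1, 1} \<times> {1..M}. h z)"
  proof (rule sum_mono2)
    show "(\<lambda>s. (sgn s, k s)) ` S \<subseteq> {-1, 1} \<times> {1..M}"
      using k_range bounds \<delta> by (force simp: sgn_if)
  qed (use \<delta> in \<open>auto simp: h_def\<close>)
  also have "\<dots> = 2 / \<delta> * harm M"
    by (simp add: sum.cartesian_product[symmetric] h_def harm_def sum_distrib_left field_simps)
  finally show ?thesis unfolding M_def .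
qed

lemma harm_le_ln_plus_one: "1 \<le> n \<Longrightarrow> harm n \<le> ln (real n) + (1::real)"
  using euler_mascheroni_sequence_decreasing[of 1 n] by (simp add: harm_def)

section \<open>The measure estimate\<close>

lemma lin_form_diff: "lin_form n b q - lin_form n b q' = lin_form n b (\<lambda>i. q i - q' i)"
  unfolding lin_form_def by (simp add: sum_subtractf[symmetric] algebra_simps)

lemma abs_lin_form_le:
  assumes "q \<in> int_box n R" "0 < n"
  shows "\<bar>lin_form n b q\<bar> \<le> R * (1 + (\<Sum>i\<in>{1..n-1}. \<bar>b i\<bar>))"
proof -
  have q: "\<bar>of_int (q i)\<bar> \<le> R" if "i < n" for i
    using assms(1) that unfolding int_box_def by auto
  have "\<bar>lin_form n b q\<bar> \<le> \<bar>of_int (q 0)\<bar> + (\<Sum>i\<in>{1..n-1}. \<bar>b i * of_int (q i)\<bar>)"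
    unfolding lin_form_def by (rule order.trans[OF abs_triangle_ineq add_left_mono[OF sum_abs]])
  also have "\<dots> \<le> R + (\<Sum>i\<in>{1..n-1}. \<bar>b i\<bar> * R)"
    using q assms(2) by (intro add_mono sum_mono) (auto simp: abs_mult mult_left_mono)
  finally show ?thesis by (simp add: algebra_simps sum_distrib_left)
qed

lemma int_box_mono: "R \<le> R' \<Longrightarrow> int_box n R \<subseteq> int_box n R'"
  unfolding int_box_def by force

lemma finite_int_box: "finite (int_box n R)"
  and card_int_box_le: "0 \<le> R \<Longrightarrow> real (card (int_box n R)) \<le> (2 * R + 1) ^ n"
proof -
  define P where "P = (\<Pi>\<^sub>E i\<in>{..<n}. {-\<lfloor>R\<rfloor>..\<lfloor>R\<rfloor>})"
  have inj: "inj_on (\<lambda>q. restrict q {..<n}) (int_box n R)"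
  proof (rule inj_onI)
    fix q q' assume "q \<in> int_box n R" "q' \<in> int_box n R" "restrict q {..<n} = restrict q' {..<n}"
    then have "q i = q' i" for i
      unfolding int_box_def by (cases "i < n") (auto dest: fun_cong[where x = i])
    then show "q = q'" by blast
  qed
  have into: "(\<lambda>q. restrict q {..<n}) ` int_box n R \<subseteq> P"
  proof (rule image_subsetI)
    fix q assume "q \<in> int_box n R"
    then have "\<bar>q i\<bar> \<le> \<lfloor>R\<rfloor>" if "i < n" for i using that by (simp add: int_box_def le_floor_iff)
    then show "restrict q {..<n} \<in> P" unfolding P_def by (force simp: abs_le_iff)
  qed
  have "finite P" unfolding P_def by (intro finite_PiE) auto
  then show "finite (int_box n R)" using inj into by (rule inj_on_finite[rotated 2])
  assume "0 \<le> R"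
  have "card (int_box n R) \<le> card P" using inj into \<open>finite P\<close> by (rule card_inj_on_le)
  then have "real (card (int_box n R)) \<le> real (card P)" by simp
  also have "\<dots> = (2 * of_int \<lfloor>R\<rfloor> + 1) ^ n"
    using \<open>0 \<le> R\<close> unfolding P_def by (simp add: card_PiE)
  also have "\<dots> \<le> (2 * R + 1) ^ n" using \<open>0 \<le> R\<close> by (intro power_mono) auto
  finally show "real (card (int_box n R)) \<le> (2 * R + 1) ^ n" .
qed

lemma lin_form_separated:
  assumes lower: "\<And>d. d \<in> int_box n (2 * R) - {\<lambda>_. 0} \<Longrightarrow> \<delta> \<le> \<bar>lin_form n b d\<bar>"
    and q: "q \<in> int_box n R" "q' \<in> int_box n R" "q \<noteq> q'"
  shows "\<delta> \<le> \<bar>lin_form n b q - lin_form n b q'\<bar>"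
proof -
  have "real_of_int \<bar>q i - q' i\<bar> \<le> 2 * R" if "i < n" for i
    using q that unfolding int_box_def by force
  then have "(\<lambda>i. q i - q' i) \<in> int_box n (2 * R)"
    using q unfolding int_box_def by auto
  moreover have "(\<lambda>i. q i - q' i) \<noteq> (\<lambda>_. 0)"
    using \<open>q \<noteq> q'\<close> by (auto simp: fun_eq_iff)
  ultimately show ?thesis using lower by (simp add: lin_form_diff)
qed

lemma A_set_subset_near_int_sets:
  assumes "0 < n" "0 < Q"
  shows "A_set n b v Q \<subseteq> (\<Union>q\<in>int_box n (2 * Q) - {\<lambda>_. 0}. near_int_set (lin_form n b q) (Q powr - v))"
proof
  fix x assume "x \<in> A_set n b v Q"
  then obtain p q where x: "x \<in> {0..<1}" and supp: "\<forall>i. n \<le> i \<longrightarrow> q i = 0"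
    and norm: "Q \<le> supnorm {0..<n} q" "supnorm {0..<n} q < 2 * Q"
    and approx: "\<bar>of_int p + lin_form n b q * x\<bar> < Q powr - v"
    unfolding A_set_def lin_form_def by blast
  have "real_of_int \<bar>q i\<bar> \<le> 2 * Q" if "i < n" for i
    using abs_le_supnorm[of "{0..<n}" i q] that norm(2) by simp
  with supp have "q \<in> int_box n (2 * Q)" by (simp add: int_box_def)
  moreover have "q \<noteq> (\<lambda>_. 0)"
    using norm(1) assms by (auto simp: supnorm_def)
  moreover have "x \<in> near_int_set (lin_form n b q) (Q powr - v)"
    using x approx unfolding near_int_set_def by blast
  ultimately show "x \<in> (\<Union>q\<in>int_box n (2 * Q) - {\<lambda>_. 0}. near_int_set (lin_form n b q) (Q powr - v))"
    by blast
qed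

lemma sum_inverse_lin_form_le:
  assumes n: "0 < n" and Q: "1 \<le> Q" and \<delta>: "0 < \<delta>"
    and lower: "\<And>d. d \<in> int_box n (4 * Q) - {\<lambda>_. 0} \<Longrightarrow> \<delta> \<le> \<bar>lin_form n b d\<bar>"
  defines "B \<equiv> 1 + (\<Sum>i\<in>{1..n-1}. \<bar>b i\<bar>)"
  shows "(\<Sum>q\<in>int_box n (2 * Q) - {\<lambda>_. 0}. 1 / \<bar>lin_form n b q\<bar>) \<le> 2 / \<delta> * (ln (2 * Q * B / \<delta>) + 1)"
proof -
  define F where "F = int_box n (2 * Q) - {\<lambda>_. 0}"
  define M where "M = nat \<lfloor>2 * Q * B / \<delta>\<rfloor>"
  have sep: "\<delta> \<le> \<bar>lin_form n b q - lin_form n b q'\<bar>" if "q \<in> F" "q' \<in> F" "q \<noteq> q'" for q q'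
    using lin_form_separated[of n "2 * Q"] lower that unfolding F_def by auto
  have bounds: "\<delta> \<le> \<bar>lin_form n b q\<bar> \<and> \<bar>lin_form n b q\<bar> \<le> 2 * Q * B" if "q \<in> F" for q
    using lower[of q] int_box_mono[of "2 * Q" "4 * Q" n] abs_lin_form_le[of q n "2 * Q" b] n Q that
    unfolding F_def B_def by auto
  have "\<delta> \<le> 1"
  proof -
    define e where "e = (\<lambda>i::nat. if i = 0 then 1 else 0 :: int)"
    have "e \<in> int_box n (4 * Q) - {\<lambda>_. 0}"
      using n Q unfolding e_def int_box_def by (auto simp: fun_eq_iff)
    moreover have "lin_form n b e = 1" unfolding lin_form_def e_def by simp
    ultimately show ?thesis using lower by fastforce
  qed
  have "1 \<le> B" unfolding B_def by (simp add: sum_nonneg)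
  with Q have "1 \<le> Q * B" using mult_mono[of 1 Q 1 B] by simp
  with \<open>\<delta> \<le> 1\<close> have "1 \<le> 2 * Q * B / \<delta>" using \<delta> by (simp add: le_divide_eq)
  then have M: "1 \<le> M" "real M \<le> 2 * Q * B / \<delta>" unfolding M_def by linarith+
  have "inj_on (lin_form n b) F" using sep \<delta> by (intro inj_onI) force
  then have "(\<Sum>q\<in>F. 1 / \<bar>lin_form n b q\<bar>) = (\<Sum>s\<in>lin_form n b ` F. 1 / \<bar>s\<bar>)"
    by (simp add: sum.reindex)
  also have "\<dots> \<le> 2 / \<delta> * harm M"
    unfolding M_def
  proof (rule sum_inverse_separated_le_harm[OF \<delta>])
    show "\<delta> \<le> \<bar>s\<bar> \<and> \<bar>s\<bar> \<le> 2 * Q * B" if "s \<in> lin_form n b ` F" for s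
      using that bounds by blast
    show "\<delta> \<le> \<bar>s - t\<bar>" if "s \<in> lin_form n b ` F" "t \<in> lin_form n b ` F" "s \<noteq> t" for s t
      using that sep by blast
  qed
  also have "\<dots> \<le> 2 / \<delta> * (ln (2 * Q * B / \<delta>) + 1)"
  proof (rule mult_left_mono)
    have "harm M \<le> ln (real M) + 1" using M(1) by (rule harm_le_ln_plus_one)
    also have "\<dots> \<le> ln (2 * Q * B / \<delta>) + 1" using M by simp
    finally show "harm M \<le> ln (2 * Q * B / \<delta>) + 1" .
  qed (use \<delta> in simp)
  finally show ?thesis unfolding F_def .
qed

lemma measure_A_set_le:
  assumes n: "0 < n" and Q: "1 \<le> Q" and v: "0 \<le> v" and \<delta>: "0 < \<delta>"
    and lower: "\<And>d. d \<in> int_box n (4 * Q) - {\<lambda>_. 0} \<Longrightarrow> \<delta> \<le> \<bar>lin_form n b d\<bar>"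
  defines "B \<equiv> 1 + (\<Sum>i\<in>{1..n-1}. \<bar>b i\<bar>)"
  shows "measure lebesgue (A_set n b v Q)
    \<le> 4 * (5 * Q) ^ n * Q powr - v + 12 / \<delta> * Q powr - v * (ln (2 * Q * B / \<delta>) + 1)"
proof -
  define \<epsilon> where "\<epsilon> = Q powr - v"
  define F where "F = int_box n (2 * Q) - {\<lambda>_. 0}"
  have \<epsilon>: "0 < \<epsilon>" "\<epsilon> \<le> 1"
    using Q v unfolding \<epsilon>_def by (auto simp: powr_minus divide_simps ge_one_powr_ge_zero)
  have finF: "finite F" by (simp add: F_def finite_int_box)
  have L: "lin_form n b q \<noteq> 0" if "q \<in> F" for q
    using lower[of q] \<delta> int_box_mono[of "2 * Q" "4 * Q" n] Q that unfolding F_def by auto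
  have card: "real (card F) \<le> (5 * Q) ^ n"
  proof -
    have "real (card F) \<le> real (card (int_box n (2 * Q)))"
      unfolding F_def by (intro of_nat_mono card_mono finite_int_box) auto
    also have "\<dots> \<le> (2 * (2 * Q) + 1) ^ n" using Q by (intro card_int_box_le) simp
    also have "\<dots> \<le> (5 * Q) ^ n" using Q by (intro power_mono) auto
    finally show ?thesis .
  qed
  have "A_set n b v Q \<subseteq> (\<Union>q\<in>F. near_int_set (lin_form n b q) \<epsilon>)"
    using A_set_subset_near_int_sets[of n Q b v] n Q unfolding F_def \<epsilon>_def by simp
  then have "measure lebesgue (A_set n b v Q)
      \<le> measure lebesgue (\<Union>q\<in>F. near_int_set (lin_form n b q) \<epsilon>)"
    by (rule measure_le_fmeasurable_superset)
      (intro fmeasurable.finite_UN finF near_int_set_lmeasurable)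
  also have "\<dots> \<le> (\<Sum>q\<in>F. measure lebesgue (near_int_set (lin_form n b q) \<epsilon>))"
    using finF near_int_set_lmeasurable by (intro measure_UNION_le) auto
  also have "\<dots> \<le> (\<Sum>q\<in>F. 4 * \<epsilon> + 6 * \<epsilon> / \<bar>lin_form n b q\<bar>)"
    using L \<epsilon> by (intro sum_mono measure_near_int_set_le) auto
  also have "\<dots> = 4 * \<epsilon> * real (card F) + 6 * \<epsilon> * (\<Sum>q\<in>F. 1 / \<bar>lin_form n b q\<bar>)"
    by (simp add: sum.distrib sum_distrib_left)
  also have "\<dots> \<le> 4 * \<epsilon> * (5 * Q) ^ n + 6 * \<epsilon> * (2 / \<delta> * (ln (2 * Q * B / \<delta>) + 1))"
    using card sum_inverse_lin_form_le[OF n Q \<delta> lower] \<epsilon> unfolding F_def B_def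
    by (intro add_mono mult_left_mono) auto
  also have "\<dots> = 4 * (5 * Q) ^ n * Q powr - v + 12 / \<delta> * Q powr - v * (ln (2 * Q * B / \<delta>) + 1)"
    unfolding \<epsilon>_def by (simp add: algebra_simps add_divide_distrib)
  finally show ?thesis .
qed

lemma ln_mult_powr_le:
  fixes \<kappa> Q s w :: real
  assumes \<kappa>: "0 < \<kappa>" and Q: "1 \<le> Q" and w: "0 < w" and s: "0 \<le> s"
  shows "ln (\<kappa> * Q powr s) + 1 \<le> (\<bar>ln \<kappa>\<bar> + 1 + s / w) * Q powr w"
proof -
  have "ln (\<kappa> * Q powr s) + 1 = ln \<kappa> + 1 + s * ln Q" using \<kappa> Q by (simp add: ln_mult ln_powr)
  also have "\<dots> \<le> (\<bar>ln \<kappa>\<bar> + 1) * Q powr w + s * (Q powr w / w)"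
  proof (intro add_mono mult_left_mono)
    have "ln \<kappa> + 1 \<le> \<bar>ln \<kappa>\<bar> + 1" by simp
    also have "\<dots> \<le> (\<bar>ln \<kappa>\<bar> + 1) * Q powr w"
      using Q w ge_one_powr_ge_zero[of Q w] by (simp add: mult_le_cancel_left1 add_nonneg_pos)
    finally show "ln \<kappa> + 1 \<le> (\<bar>ln \<kappa>\<bar> + 1) * Q powr w" .
  qed (use ln_powr_bound[OF Q w] s in auto)
  also have "\<dots> = (\<bar>ln \<kappa>\<bar> + 1 + s / w) * Q powr w" by (simp add: algebra_simps)
  finally show ?thesis .
qed

lemma harmonic_term_le_powr:
  fixes c u w Q B v :: real
  assumes c: "0 < c" and u: "0 \<le> u" and w: "0 < w" and Q: "1 \<le> Q" and B: "0 < B"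
  defines "\<delta> \<equiv> c * (4 * Q) powr (- u)" and "\<kappa> \<equiv> 2 * B * 4 powr u / c"
  shows "12 / \<delta> * Q powr - v * (ln (2 * Q * B / \<delta>) + 1)
    \<le> 12 * 4 powr u / c * (\<bar>ln \<kappa>\<bar> + 1 + (1 + u) / w) * Q powr (u + w - v)"
proof -
  have \<delta>: "0 < \<delta>" using c Q by (simp add: \<delta>_def)
  have inv_\<delta>: "inverse \<delta> = 4 powr u / c * Q powr u"
    using c Q by (simp add: \<delta>_def powr_minus powr_mult field_simps)
  have "2 * Q * B / \<delta> = 2 * B * inverse \<delta> * Q" by (simp add: divide_inverse)
  also have "\<dots> = \<kappa> * (Q * Q powr u)" unfolding inv_\<delta> \<kappa>_def by simp
  also have "Q * Q powr u = Q powr (1 + u)" using Q by (simp add: powr_add)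
  finally have "12 / \<delta> * Q powr - v * (ln (2 * Q * B / \<delta>) + 1)
      = 12 / \<delta> * Q powr - v * (ln (\<kappa> * Q powr (1 + u)) + 1)" by simp
  also have "\<dots> \<le> 12 / \<delta> * Q powr - v * ((\<bar>ln \<kappa>\<bar> + 1 + (1 + u) / w) * Q powr w)"
    using c B Q w u \<delta> by (intro mult_left_mono ln_mult_powr_le) (auto simp: \<kappa>_def)
  also have "\<dots> = 12 * 4 powr u / c * (\<bar>ln \<kappa>\<bar> + 1 + (1 + u) / w) * (Q powr u * Q powr w * Q powr - v)"
    unfolding divide_inverse inv_\<delta> by (simp add: algebra_simps)
  also have "Q powr u * Q powr w * Q powr - v = Q powr (u + w - v)"
    by (simp add: powr_add[symmetric])
  finally show ?thesis .
qed

lemma measure_A_set_le_powr: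
  assumes n: "0 < n" and v: "0 \<le> v" and c: "0 < c" and u: "0 \<le> u" and w: "0 < w"
    and lower: "\<And>R d. 1 \<le> R \<Longrightarrow> d \<in> int_box n R - {\<lambda>_. 0} \<Longrightarrow> c * R powr (- u) \<le> \<bar>lin_form n b d\<bar>"
  obtains C where "0 < C"
    "\<And>Q. 1 \<le> Q \<Longrightarrow> measure lebesgue (A_set n b v Q) < C * Q powr (max (real n - v) (u + w - v))"
proof -
  define B where "B = 1 + (\<Sum>i\<in>{1..n-1}. \<bar>b i\<bar>)"
  define D where "D = 12 * 4 powr u / c * (\<bar>ln (2 * B * 4 powr u / c)\<bar> + 1 + (1 + u) / w)"
  define m where "m = max (real n - v) (u + w - v)"
  have "0 < B" unfolding B_def by (simp add: add_pos_nonneg sum_nonneg)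
  have "0 \<le> D" using c u w unfolding D_def by simp
  then have "0 < 4 * 5 ^ n + D + 1" by (simp add: add_pos_nonneg)
  moreover have "measure lebesgue (A_set n b v Q) < (4 * 5 ^ n + D + 1) * Q powr m"
    if Q: "1 \<le> Q" for Q
  proof -
    define \<delta> where "\<delta> = c * (4 * Q) powr (- u)"
    have \<delta>: "0 < \<delta>" using c Q by (simp add: \<delta>_def)
    have "\<delta> \<le> \<bar>lin_form n b d\<bar>" if "d \<in> int_box n (4 * Q) - {\<lambda>_. 0}" for d
      using lower[OF _ that] Q unfolding \<delta>_def by simp
    then have "measure lebesgue (A_set n b v Q)
        \<le> 4 * (5 * Q) ^ n * Q powr - v + 12 / \<delta> * Q powr - v * (ln (2 * Q * B / \<delta>) + 1)"
      unfolding B_def by (rule measure_A_set_le[OF n Q v \<delta>])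
    also have "\<dots> \<le> 4 * 5 ^ n * Q powr (real n - v) + D * Q powr (u + w - v)"
    proof (rule add_mono)
      have "Q powr (real n - v) = Q ^ n * Q powr - v"
        using Q by (simp add: powr_diff powr_realpow powr_minus divide_inverse)
      then show "4 * (5 * Q) ^ n * Q powr - v \<le> 4 * 5 ^ n * Q powr (real n - v)"
        by (simp add: power_mult_distrib)
      show "12 / \<delta> * Q powr - v * (ln (2 * Q * B / \<delta>) + 1) \<le> D * Q powr (u + w - v)"
        unfolding \<delta>_def D_def by (rule harmonic_term_le_powr[OF c u w Q \<open>0 < B\<close>])
    qed
    also have "\<dots> \<le> (4 * 5 ^ n + D) * Q powr m"
      using Q \<open>0 \<le> D\<close> unfolding m_def distrib_right
      by (intro add_mono mult_left_mono powr_mono) auto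
    also have "\<dots> < (4 * 5 ^ n + D + 1) * Q powr m"
      using Q by (simp add: distrib_right)
    finally show ?thesis .
  qed
  ultimately show ?thesis using that unfolding m_def by blast
qed

theorem lemma4p8:
  fixes n :: nat and b :: "nat \<Rightarrow> real" and v :: real
  assumes "n \<ge> 2" and "\<not> W_plus n b" and "v > real n"
  shows "\<exists>C > 0. \<forall>Q > 1. measure lebesgue (A_set n b v Q) < C * Q powr ((real n - v) / 2)"
proof -
  define u where "u = (3 * real n + v) / 4"
  define w where "w = (v - real n) / 4"
  have n: "0 < n" and v: "0 \<le> v" using assms(1,3) by simp_all
  have u: "real n < u" and w: "0 < w"
    and exponent: "max (real n - v) (u + w - v) = (real n - v) / 2"
    using assms(3) unfolding u_def w_def by (auto simp: field_simps)
  then have "0 \<le> u" using of_nat_0_le_iff[of n] by linarith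
  have "\<not> W_u n u b" using assms(2) u unfolding W_plus_def by blast
  then obtain c where "0 < c" and lower:
    "\<And>R d. 1 \<le> R \<Longrightarrow> d \<in> int_box n R - {\<lambda>_. 0} \<Longrightarrow> c * R powr (- u) \<le> \<bar>lin_form n b d\<bar>"
    using not_W_u_imp_lin_form_bounded_below[OF _ \<open>0 \<le> u\<close>] by blast
  obtain C where "0 < C"
    and "\<And>Q. 1 \<le> Q \<Longrightarrow> measure lebesgue (A_set n b v Q) < C * Q powr (max (real n - v) (u + w - v))"
    using measure_A_set_le_powr[OF n v \<open>0 < c\<close> \<open>0 \<le> u\<close> w lower] by blast
  then show ?thesis unfolding exponent by (meson less_imp_le)
qed
end
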